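(* Almost surely the following holds simultaneously for all $h_0,h_1\in\mathbb R$: if $h_0,h_1\ge0$ then $h_*\le h'$ pointwise on $\{0,\dots,L\}$ for every minimizer $h'$ of $E$ among functions $h:\{0,\dots,L\}\to\mathbb R$ with $h(0)=h_0$, $h(L)=h_1$; and if $h_0,h_1\le0$ then $h_*\ge h'$ pointwise for every such minimizer $h'$. (The exceptional null set does not depend on $(h_0,h_1)$.)
   Context: Let $L\ge2$ be a power of $2$. For $h:\{0,\dots,L\}\to\mathbb R$ set $D(h)=\frac12\sum_{x=1}^L(h(x)-h(x-1))^2$, $W(h)=\sum_{x=1}^{L-1}W(x,h(x))$ where $\{W(x,\cdot)\}_{x=1}^{L-1}$ are independent two-sided standard Brownian motions (with $W(x,0)=0$), and $E(h)=D(h)-W(h)$. $h_*$ denotes the almost surely unique minimizer of $E$ among $h$ with $h(0)=h(L)=0$. *)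

theory Defs
  imports "HOL-Probability.Probability"
begin

definition Dir :: "nat \<Rightarrow> (nat \<Rightarrow> real) \<Rightarrow> real" where
  "Dir L h = (1/2) * (\<Sum>x = 1..L. (h x - h (x - 1))^2)"

definition Wpot :: "nat \<Rightarrow> (nat \<Rightarrow> real \<Rightarrow> 'a \<Rightarrow> real) \<Rightarrow> 'a \<Rightarrow> (nat \<Rightarrow> real) \<Rightarrow> real" where
  "Wpot L W w h = (\<Sum>x = 1..L - 1. W x (h x) w)"

definition Energy :: "nat \<Rightarrow> (nat \<Rightarrow> real \<Rightarrow> 'a \<Rightarrow> real) \<Rightarrow> 'a \<Rightarrow> (nat \<Rightarrow> real) \<Rightarrow> real" where
  "Energy L W w h = Dir L h - Wpot L W w h"

text \<open>h is a minimizer of E (at sample point w) among h with h(0)=a, h(L)=b.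
  Only the values of h on {0..L} matter.\<close>
definition is_minimizer ::
  "nat \<Rightarrow> (nat \<Rightarrow> real \<Rightarrow> 'a \<Rightarrow> real) \<Rightarrow> 'a \<Rightarrow> real \<Rightarrow> real \<Rightarrow> (nat \<Rightarrow> real) \<Rightarrow> bool" where
  "is_minimizer L W w a b h \<longleftrightarrow>
     h 0 = a \<and> h L = b \<and>
     (\<forall>g. g 0 = a \<longrightarrow> g L = b \<longrightarrow> Energy L W w h \<le> Energy L W w g)"

definition indep_two_sided_BMs ::
  "'a measure \<Rightarrow> nat \<Rightarrow> (nat \<Rightarrow> real \<Rightarrow> 'a \<Rightarrow> real) \<Rightarrow> bool" where
  "indep_two_sided_BMs M L W \<longleftrightarrow>
     (AE w in M. \<forall>x\<in>{1..L - 1}. W x 0 w = 0 \<and> continuous_on UNIV (\<lambda>t. W x t w)) \<and>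
     (\<forall>(n::nat) (ts::nat \<Rightarrow> real). strict_mono ts \<longrightarrow>
        prob_space.indep_vars M (\<lambda>_. borel)
          (\<lambda>(x, i) w. W x (ts (Suc i)) w - W x (ts i) w) ({1..L - 1} \<times> {..<n}) \<and>
        (\<forall>x\<in>{1..L - 1}. \<forall>i<n.
           distributed M lborel (\<lambda>w. W x (ts (Suc i)) w - W x (ts i) w)
             (normal_density 0 (sqrt (ts (Suc i) - ts i)))))"

end

theory Submission
  imports Defs
begin

(*
  The energy is submodular for the pointwise lattice operations,
  E (min f g) + E (max f g) <= E f + E g: the Dirichlet energy is submodular and the
  potential W(h) is modular. So if h_* has zero boundary values and h' is a minimizer with
  boundary values h0, h1 >= 0, then min h_* h' is again a minimizer with zero boundary
  values (dually max h' h_* when h0, h1 <= 0), and the comparison follows from almost sure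
  uniqueness of h_*.

  For uniqueness, suppose two zero-boundary minimizers satisfy h(x) <= b < c <= g(x) at an
  interior site x, with b, c rational. Then the infimum of E over height functions below b
  at x and the infimum over those above c at x both equal min E. Shifted by W(x, b) and
  W(x, c) respectively, these infima (taken over the countably many rational height
  functions) become measurable functions of increments of W that avoid the interval (b, c)
  at site x, hence are independent of W(x, c) - W(x, b). As the latter has a density, it
  coincides with the difference of the shifted infima only on a null set, and a countable
  union over (x, b, c) gives uniqueness.
*)

section \<open>Submodularity of the energy\<close>

lemma min_max_diff_sq_le:
  fixes a b c d :: real
  shows "(min a b - min c d)\<^sup>2 + (max a b - max c d)\<^sup>2 \<le> (a - c)\<^sup>2 + (b - d)\<^sup>2"
proof (cases "a \<le> b"; cases "c \<le> d")
  assume "a \<le> b" "\<not> c \<le> d"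
  then have "0 \<le> (b - a) * (c - d)" by simp
  with \<open>a \<le> b\<close> \<open>\<not> c \<le> d\<close> show ?thesis
    by (simp add: min_def max_def power2_eq_square algebra_simps)
next
  assume "\<not> a \<le> b" "c \<le> d"
  then have "0 \<le> (a - b) * (d - c)" by simp
  with \<open>\<not> a \<le> b\<close> \<open>c \<le> d\<close> show ?thesis
    by (simp add: min_def max_def power2_eq_square algebra_simps)
qed (auto simp: min_def max_def)

lemma Dir_min_max_le:
  "Dir L (\<lambda>y. min (f y) (g y)) + Dir L (\<lambda>y. max (f y) (g y)) \<le> Dir L f + Dir L g"
proof -
  have "(\<Sum>x = 1..L. (min (f x) (g x) - min (f (x - 1)) (g (x - 1)))\<^sup>2)
      + (\<Sum>x = 1..L. (max (f x) (g x) - max (f (x - 1)) (g (x - 1)))\<^sup>2)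
    \<le> (\<Sum>x = 1..L. (f x - f (x - 1))\<^sup>2) + (\<Sum>x = 1..L. (g x - g (x - 1))\<^sup>2)"
    unfolding sum.distrib[symmetric] by (intro sum_mono min_max_diff_sq_le)
  then show ?thesis
    unfolding Dir_def by simp
qed

lemma Wpot_min_max:
  "Wpot L W w (\<lambda>y. min (f y) (g y)) + Wpot L W w (\<lambda>y. max (f y) (g y)) = Wpot L W w f + Wpot L W w g"
proof -
  have "W y (min a b) w + W y (max a b) w = W y a w + W y b w" for y a b
    by (cases "a \<le> b") (auto simp: min_def max_def)
  then show ?thesis
    unfolding Wpot_def by (simp add: sum.distrib[symmetric])
qed

lemma Energy_min_max_le:
  "Energy L W w (\<lambda>y. min (f y) (g y)) + Energy L W w (\<lambda>y. max (f y) (g y))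
     \<le> Energy L W w f + Energy L W w g"
  using Dir_min_max_le[of L f g] Wpot_min_max[of L W w f g] unfolding Energy_def by linarith

lemma is_minimizer_min_max:
  assumes h: "is_minimizer L W w a b h" and g: "is_minimizer L W w c d g"
    and "a \<le> c" "b \<le> d"
  shows "is_minimizer L W w a b (\<lambda>y. min (h y) (g y))"
    and "is_minimizer L W w c d (\<lambda>y. max (h y) (g y))"
proof -
  let ?m = "\<lambda>y. min (h y) (g y)" and ?M = "\<lambda>y. max (h y) (g y)"
  have bdry: "?m 0 = a" "?m L = b" "?M 0 = c" "?M L = d"
    using h g \<open>a \<le> c\<close> \<open>b \<le> d\<close> unfolding is_minimizer_def by auto
  have "Energy L W w h \<le> Energy L W w ?m" "Energy L W w g \<le> Energy L W w ?M"
    using h g bdry unfolding is_minimizer_def by auto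
  then have "Energy L W w ?m = Energy L W w h" "Energy L W w ?M = Energy L W w g"
    using Energy_min_max_le[of L W w h g] by linarith+
  then show "is_minimizer L W w a b ?m" "is_minimizer L W w c d ?M"
    using h g bdry unfolding is_minimizer_def by auto
qed

lemma unique_zero_boundary_minimizer_le:
  assumes hstar: "is_minimizer L W w 0 0 hstar"
    and unique: "\<And>g. is_minimizer L W w 0 0 g \<Longrightarrow> \<forall>x\<le>L. g x = hstar x"
    and h': "is_minimizer L W w h0 h1 h'" and "0 \<le> h0" "0 \<le> h1"
  shows "\<forall>x\<le>L. hstar x \<le> h' x"
proof -
  have "is_minimizer L W w 0 0 (\<lambda>y. min (hstar y) (h' y))"
    using is_minimizer_min_max(1)[OF hstar h'] assms(4,5) by blast
  then show ?thesis
    using unique by (metis min.cobounded2)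
qed

lemma unique_zero_boundary_minimizer_ge:
  assumes hstar: "is_minimizer L W w 0 0 hstar"
    and unique: "\<And>g. is_minimizer L W w 0 0 g \<Longrightarrow> \<forall>x\<le>L. g x = hstar x"
    and h': "is_minimizer L W w h0 h1 h'" and "h0 \<le> 0" "h1 \<le> 0"
  shows "\<forall>x\<le>L. h' x \<le> hstar x"
proof -
  have "is_minimizer L W w 0 0 (\<lambda>y. max (h' y) (hstar y))"
    using is_minimizer_min_max(2)[OF h' hstar] assms(4,5) by blast
  then show ?thesis
    using unique by (metis max.cobounded1)
qed

section \<open>Approximation by rational height functions\<close>

definition rat_below :: "real \<Rightarrow> nat \<Rightarrow> rat" where
  "rat_below t n = of_int \<lfloor>t * real (Suc n)\<rfloor> / of_nat (Suc n)"

definition rat_above :: "real \<Rightarrow> nat \<Rightarrow> rat" where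
  "rat_above t n = - rat_below (- t) n"

lemma of_rat_rat_below: "of_rat (rat_below t n) = of_int \<lfloor>t * real (Suc n)\<rfloor> / real (Suc n)"
  unfolding rat_below_def of_rat_divide of_rat_of_int_eq of_rat_of_nat_eq ..

lemma rat_below_le: "of_rat (rat_below t n) \<le> t"
proof -
  have "of_int \<lfloor>t * real (Suc n)\<rfloor> \<le> t * real (Suc n)"
    by simp
  then show ?thesis
    unfolding of_rat_rat_below by (simp add: divide_le_eq)
qed

lemma rat_below_ge: "t - 1 / real (Suc n) \<le> of_rat (rat_below t n)"
proof -
  have "t * real (Suc n) - 1 \<le> of_int \<lfloor>t * real (Suc n)\<rfloor>"
    by linarith
  then show ?thesis
    unfolding of_rat_rat_below by (simp add: le_divide_eq left_diff_distrib)
qed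

lemma rat_below_tendsto: "(\<lambda>n. of_rat (rat_below t n)) \<longlonglongrightarrow> t"
proof (rule tendsto_sandwich[of "\<lambda>n. t - 1 / real (Suc n)" _ _ "\<lambda>_. t"])
  show "(\<lambda>n. t - 1 / real (Suc n)) \<longlonglongrightarrow> t"
    using tendsto_diff[OF tendsto_const LIMSEQ_inverse_real_of_nat, of t]
    by (simp add: inverse_eq_divide)
qed (use rat_below_le rat_below_ge in auto)

lemma rat_above_ge: "t \<le> of_rat (rat_above t n)"
  using rat_below_le[of "- t" n] by (simp add: rat_above_def of_rat_minus)

lemma rat_above_tendsto: "(\<lambda>n. of_rat (rat_above t n)) \<longlonglongrightarrow> t"
  using tendsto_minus[OF rat_below_tendsto[of "- t"]] by (simp add: rat_above_def of_rat_minus)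

lemma Energy_tendsto:
  assumes cont: "\<forall>y\<in>{1..L - 1}. continuous_on UNIV (\<lambda>t. W y t w)"
    and lim: "\<And>y. y \<le> L \<Longrightarrow> (\<lambda>n. F n y) \<longlonglongrightarrow> h y"
  shows "(\<lambda>n. Energy L W w (F n)) \<longlonglongrightarrow> Energy L W w h"
proof -
  have "(\<lambda>n. Dir L (F n)) \<longlonglongrightarrow> Dir L h"
    unfolding Dir_def by (intro tendsto_intros lim) auto
  moreover have "(\<lambda>n. W y (F n y) w) \<longlonglongrightarrow> W y (h y) w" if "y \<in> {1..L - 1}" for y
  proof -
    have "isCont (\<lambda>t. W y t w) (h y)"
      using cont that by (simp add: continuous_on_eq_continuous_at)
    moreover have "y \<le> L"
      using that by auto
    ultimately show ?thesis
      using lim isCont_tendsto_compose by blast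
  qed
  then have "(\<lambda>n. Wpot L W w (F n)) \<longlonglongrightarrow> Wpot L W w h"
    unfolding Wpot_def by (intro tendsto_sum)
  ultimately show ?thesis
    unfolding Energy_def by (intro tendsto_diff)
qed

definition rat_profile :: "nat \<Rightarrow> (nat \<Rightarrow> rat) \<Rightarrow> nat \<Rightarrow> real" where
  "rat_profile L f y = (if y \<in> {1..L - 1} then of_rat (f y) else 0)"

definition rat_profiles :: "nat \<Rightarrow> (nat \<Rightarrow> rat) set" where
  "rat_profiles L = {1..L - 1} \<rightarrow>\<^sub>E UNIV"

lemma rat_profile_boundary: "rat_profile L f 0 = 0" "rat_profile L f L = 0"
  by (auto simp: rat_profile_def)

lemma countable_rat_profiles: "countable (rat_profiles L)"
  unfolding rat_profiles_def by (intro countable_PiE) auto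

lemma INF_Energy_rat_profile:
  assumes cont: "\<forall>y\<in>{1..L - 1}. continuous_on UNIV (\<lambda>t. W y t w)"
    and h: "is_minimizer L W w 0 0 h"
    and fs: "\<And>n. fs n \<in> S"
    and lim: "\<And>y. y \<in> {1..L - 1} \<Longrightarrow> (\<lambda>n. of_rat (fs n y)) \<longlonglongrightarrow> h y"
  shows "(INF f\<in>S. ereal (Energy L W w (rat_profile L f) + c)) = ereal (Energy L W w h + c)"
proof (rule antisym)
  have "(\<lambda>n. Energy L W w (rat_profile L (fs n))) \<longlonglongrightarrow> Energy L W w h"
  proof (rule Energy_tendsto[where W = W and w = w, OF cont])
    fix y assume "y \<le> L"
    show "(\<lambda>n. rat_profile L (fs n) y) \<longlonglongrightarrow> h y"
    proof (cases "y \<in> {1..L - 1}")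
      case True
      then show ?thesis using lim[of y] by (simp add: rat_profile_def)
    next
      case False
      with \<open>y \<le> L\<close> have "y = 0 \<or> y = L" by auto
      with h False show ?thesis by (auto simp: rat_profile_def is_minimizer_def)
    qed
  qed
  then have "(\<lambda>n. ereal (Energy L W w (rat_profile L (fs n)) + c)) \<longlonglongrightarrow> ereal (Energy L W w h + c)"
    by (intro tendsto_intros)
  then show "(INF f\<in>S. ereal (Energy L W w (rat_profile L f) + c)) \<le> ereal (Energy L W w h + c)"
    by (rule LIMSEQ_le_const) (auto intro!: INF_lower fs)
  have "Energy L W w h \<le> Energy L W w (rat_profile L f)" for f
    using h rat_profile_boundary unfolding is_minimizer_def by blast
  then show "ereal (Energy L W w h + c) \<le> (INF f\<in>S. ereal (Energy L W w (rat_profile L f) + c))"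
    by (intro INF_greatest) simp
qed

section \<open>Minimal energies as functions of the increments of W\<close>

fun increment :: "(nat \<Rightarrow> real \<Rightarrow> 'a \<Rightarrow> real) \<Rightarrow> nat \<times> rat \<times> rat \<Rightarrow> 'a \<Rightarrow> real" where
  "increment W (y, s, t) = (\<lambda>w. W y (of_rat t) w - W y (of_rat s) w)"

definition increments_avoiding :: "nat \<Rightarrow> nat \<Rightarrow> rat \<Rightarrow> rat \<Rightarrow> (nat \<times> rat \<times> rat) set" where
  "increments_avoiding L x b c =
     {(y, s, t). y \<in> {1..L - 1} \<and> (y \<noteq> x \<or> s \<le> b \<and> t \<le> b \<or> c \<le> s \<and> c \<le> t)}"

text \<open>The energy of the profile plus W(x, a), written through increments of W: over [0, f y]
  at the sites y \<noteq> x (using W(y, 0) = 0) and over [a, f x] at x.\<close>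

definition energy_of_increments ::
  "nat \<Rightarrow> nat \<Rightarrow> rat \<Rightarrow> (nat \<times> rat \<times> rat \<Rightarrow> real) \<Rightarrow> (nat \<Rightarrow> rat) \<Rightarrow> real" where
  "energy_of_increments L x a v f =
     Dir L (rat_profile L f) - (\<Sum>y\<in>{1..L - 1} - {x}. v (y, 0, f y)) - v (x, a, f x)"

definition min_energy_of_increments ::
  "nat \<Rightarrow> nat \<Rightarrow> rat \<Rightarrow> rat set \<Rightarrow> (nat \<times> rat \<times> rat \<Rightarrow> real) \<Rightarrow> ereal" where
  "min_energy_of_increments L x a A v =
     (INF f\<in>{f \<in> rat_profiles L. f x \<in> A}. ereal (energy_of_increments L x a v f))"

definition level_gap :: "nat \<Rightarrow> nat \<Rightarrow> rat \<Rightarrow> rat \<Rightarrow> (nat \<times> rat \<times> rat \<Rightarrow> real) \<Rightarrow> real" where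
  "level_gap L x b c v =
     real_of_ereal (min_energy_of_increments L x c {c..} v)
     - real_of_ereal (min_energy_of_increments L x b {..b} v)"

lemma energy_of_increments_eq:
  assumes W0: "\<forall>y\<in>{1..L - 1}. W y 0 w = 0" and x: "x \<in> {1..L - 1}"
    and a: "(x, a, f x) \<in> increments_avoiding L x b c"
  shows "energy_of_increments L x a (\<lambda>k\<in>increments_avoiding L x b c. increment W k w) f
    = Energy L W w (rat_profile L f) + W x (of_rat a) w"
proof -
  have "(y, 0, f y) \<in> increments_avoiding L x b c" if "y \<in> {1..L - 1} - {x}" for y
    using that by (simp add: increments_avoiding_def)
  then have "(\<Sum>y\<in>{1..L - 1} - {x}. (\<lambda>k\<in>increments_avoiding L x b c. increment W k w) (y, 0, f y))
      = (\<Sum>y\<in>{1..L - 1} - {x}. W y (rat_profile L f y) w)"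
    using W0 by (intro sum.cong) (auto simp: rat_profile_def)
  moreover have "Wpot L W w (rat_profile L f)
      = W x (of_rat (f x)) w + (\<Sum>y\<in>{1..L - 1} - {x}. W y (rat_profile L f y) w)"
    using x by (simp add: Wpot_def sum.remove rat_profile_def)
  ultimately show ?thesis
    using a by (simp add: energy_of_increments_def Energy_def)
qed

lemma min_energy_of_increments_eq:
  assumes W0: "\<forall>y\<in>{1..L - 1}. W y 0 w = 0"
    and cont: "\<forall>y\<in>{1..L - 1}. continuous_on UNIV (\<lambda>t. W y t w)"
    and x: "x \<in> {1..L - 1}" and A: "\<And>r. r \<in> A \<Longrightarrow> (x, a, r) \<in> increments_avoiding L x b c"
    and h: "is_minimizer L W w 0 0 h"
    and fs: "\<And>n. fs n \<in> rat_profiles L" "\<And>n. fs n x \<in> A"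
    and lim: "\<And>y. y \<in> {1..L - 1} \<Longrightarrow> (\<lambda>n. of_rat (fs n y)) \<longlonglongrightarrow> h y"
  shows "min_energy_of_increments L x a A (\<lambda>k\<in>increments_avoiding L x b c. increment W k w)
    = ereal (Energy L W w h + W x (of_rat a) w)"
proof -
  have "min_energy_of_increments L x a A (\<lambda>k\<in>increments_avoiding L x b c. increment W k w)
      = (INF f\<in>{f \<in> rat_profiles L. f x \<in> A}. ereal (Energy L W w (rat_profile L f) + W x (of_rat a) w))"
    unfolding min_energy_of_increments_def
    using energy_of_increments_eq[where W = W and w = w, OF W0 x] A by (intro INF_cong) auto
  also have "\<dots> = ereal (Energy L W w h + W x (of_rat a) w)"
    using fs by (intro INF_Energy_rat_profile[where W = W and w = w, OF cont h _ lim]) auto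
  finally show ?thesis .
qed

lemma increment_eq_level_gap:
  assumes W0: "\<forall>y\<in>{1..L - 1}. W y 0 w = 0"
    and cont: "\<forall>y\<in>{1..L - 1}. continuous_on UNIV (\<lambda>t. W y t w)"
    and x: "x \<in> {1..L - 1}"
    and h: "is_minimizer L W w 0 0 h" and g: "is_minimizer L W w 0 0 g"
    and hb: "h x \<le> of_rat b" and gc: "of_rat c \<le> g x"
  shows "increment W (x, b, c) w = level_gap L x b c (\<lambda>k\<in>increments_avoiding L x b c. increment W k w)"
proof -
  let ?v = "\<lambda>k\<in>increments_avoiding L x b c. increment W k w"
  have below: "min_energy_of_increments L x b {..b} ?v = ereal (Energy L W w h + W x (of_rat b) w)"
  proof (rule min_energy_of_increments_eq[where W = W and w = w, OF W0 cont x _ h])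
    fix n
    have "of_rat (rat_below (h x) n) \<le> (of_rat b :: real)"
      using rat_below_le[of "h x" n] hb by linarith
    then show "(\<lambda>y\<in>{1..L - 1}. rat_below (h y) n) x \<in> {..b}"
      using x by (simp add: of_rat_less_eq)
  qed (use x rat_below_tendsto in \<open>auto simp: increments_avoiding_def rat_profiles_def\<close>)
  have above: "min_energy_of_increments L x c {c..} ?v = ereal (Energy L W w g + W x (of_rat c) w)"
  proof (rule min_energy_of_increments_eq[where W = W and w = w, OF W0 cont x _ g])
    fix n
    have "(of_rat c :: real) \<le> of_rat (rat_above (g x) n)"
      using rat_above_ge[of "g x" n] gc by linarith
    then show "(\<lambda>y\<in>{1..L - 1}. rat_above (g y) n) x \<in> {c..}"
      using x by (simp add: of_rat_less_eq)
  qed (use x rat_above_tendsto in \<open>auto simp: increments_avoiding_def rat_profiles_def\<close>)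
  have "Energy L W w h = Energy L W w g"
    using h g unfolding is_minimizer_def by (meson antisym)
  then show ?thesis
    unfolding level_gap_def below above by simp
qed

lemma zero_boundary_minimizers_eq:
  assumes W0: "\<forall>y\<in>{1..L - 1}. W y 0 w = 0"
    and cont: "\<forall>y\<in>{1..L - 1}. continuous_on UNIV (\<lambda>t. W y t w)"
    and gap: "\<And>x b c. x \<in> {1..L - 1} \<Longrightarrow> b < c \<Longrightarrow>
      increment W (x, b, c) w \<noteq> level_gap L x b c (\<lambda>k\<in>increments_avoiding L x b c. increment W k w)"
    and h: "is_minimizer L W w 0 0 h" and g: "is_minimizer L W w 0 0 g" and "x \<le> L"
  shows "h x = g x"
proof -
  have ordered: "g x \<le> h x" if h: "is_minimizer L W w 0 0 h" and g: "is_minimizer L W w 0 0 g"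
    and x: "x \<in> {1..L - 1}" for h g x
  proof (rule ccontr)
    assume "\<not> g x \<le> h x"
    then obtain b c where hb: "h x < of_rat b" and bc: "of_rat b < (of_rat c :: real)"
      and cg: "of_rat c < g x"
      by (metis of_rat_dense not_le)
    have "increment W (x, b, c) w = level_gap L x b c (\<lambda>k\<in>increments_avoiding L x b c. increment W k w)"
      using hb cg by (intro increment_eq_level_gap[where W = W and w = w, OF W0 cont x h g]) auto
    moreover have "b < c"
      using bc by (simp add: of_rat_less)
    ultimately show False
      using gap[OF x] by blast
  qed
  show ?thesis
  proof (cases "x \<in> {1..L - 1}")
    case True
    then show ?thesis
      using ordered[OF h g] ordered[OF g h] by (simp add: antisym)
  next
    case False
    with \<open>x \<le> L\<close> have "x = 0 \<or> x = L"
      by auto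
    with h g show ?thesis
      by (auto simp: is_minimizer_def)
  qed
qed

lemma min_energy_of_increments_measurable:
  assumes x: "x \<in> {1..L - 1}" and A: "\<And>r. r \<in> A \<Longrightarrow> (x, a, r) \<in> increments_avoiding L x b c"
  shows "min_energy_of_increments L x a A
    \<in> borel_measurable (PiM (increments_avoiding L x b c) (\<lambda>_. borel))"
  unfolding min_energy_of_increments_def
proof (rule borel_measurable_INF)
  show "countable {f \<in> rat_profiles L. f x \<in> A}"
    using countable_rat_profiles by (rule countable_subset[rotated]) auto
  fix f assume f: "f \<in> {f \<in> rat_profiles L. f x \<in> A}"
  have component: "(\<lambda>v. v k) \<in> borel_measurable (PiM (increments_avoiding L x b c) (\<lambda>_. borel))"
    if "k \<in> increments_avoiding L x b c" for k
    using that by (rule measurable_component_singleton)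
  have "(y, 0, f y) \<in> increments_avoiding L x b c" if "y \<in> {1..L - 1} - {x}" for y
    using that by (simp add: increments_avoiding_def)
  then show "(\<lambda>v. ereal (energy_of_increments L x a v f))
      \<in> borel_measurable (PiM (increments_avoiding L x b c) (\<lambda>_. borel))"
    unfolding energy_of_increments_def using f A
    by (intro borel_measurable_ereal borel_measurable_diff borel_measurable_sum component) auto
qed

lemma level_gap_measurable:
  assumes "x \<in> {1..L - 1}"
  shows "level_gap L x b c \<in> borel_measurable (PiM (increments_avoiding L x b c) (\<lambda>_. borel))"
  unfolding level_gap_def[abs_def] using assms
  by (intro borel_measurable_diff borel_measurable_real_of_ereal min_energy_of_increments_measurable)
    (auto simp: increments_avoiding_def)

section \<open>Independence\<close>

lemma emeasure_distr_singleton_eq_0: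
  assumes "distributed M lborel Z f"
  shows "emeasure (distr M borel Z) {y} = 0"
proof -
  have Z: "Z \<in> borel_measurable M"
    using assms by (simp add: distributed_def)
  have "AE x in lborel. x \<in> {y} \<longrightarrow> f x = 0"
    using AE_lborel_singleton[of y] by eventually_elim auto
  then have "{y} \<in> null_sets (density lborel f)"
    using assms by (simp add: null_sets_density_iff distributed_def)
  moreover have "distr M borel Z = distr M lborel Z"
    using Z by (intro measure_eqI) (simp_all add: emeasure_distr)
  ultimately show ?thesis
    using assms by (simp add: distributed_def null_setsD1)
qed

lemma Int_stable_vimage:
  assumes "Int_stable F"
  shows "Int_stable {X -` A \<inter> \<Omega> | A. A \<in> F}"
proof (rule Int_stableI, clarify)
  fix A B assume "A \<in> F" "B \<in> F"
  then have "A \<inter> B \<in> F"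
    using assms by (simp add: Int_stableD)
  moreover have "X -` A \<inter> \<Omega> \<inter> (X -` B \<inter> \<Omega>) = X -` (A \<inter> B) \<inter> \<Omega>"
    by auto
  ultimately show "\<exists>C. X -` A \<inter> \<Omega> \<inter> (X -` B \<inter> \<Omega>) = X -` C \<inter> \<Omega> \<and> C \<in> F"
    by blast
qed

context prob_space
begin

text \<open>Unlike indep_var, this allows the two random variables to take values in different
  types.\<close>

definition indep_rvs :: "'b measure \<Rightarrow> ('a \<Rightarrow> 'b) \<Rightarrow> 'c measure \<Rightarrow> ('a \<Rightarrow> 'c) \<Rightarrow> bool" where
  "indep_rvs S X T Y \<longleftrightarrow> (\<forall>A\<in>sets S. \<forall>B\<in>sets T.
     prob (X -` A \<inter> Y -` B \<inter> space M) = prob (X -` A \<inter> space M) * prob (Y -` B \<inter> space M))"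

lemma indep_var_compose_indep_rvs:
  assumes indep: "indep_var S X T Y" and f: "f \<in> measurable S S'" and g: "g \<in> measurable T T'"
  shows "indep_rvs S' (\<lambda>w. f (X w)) T' (\<lambda>w. g (Y w))"
  unfolding indep_rvs_def
proof (intro ballI)
  fix A B assume A: "A \<in> sets S'" and B: "B \<in> sets T'"
  have X: "X \<in> measurable M S" and Y: "Y \<in> measurable M T"
    using indep_var_rv1[OF indep] indep_var_rv2[OF indep] .
  have "prob ((\<lambda>w. (X w, Y w)) -` ((f -` A \<inter> space S) \<times> (g -` B \<inter> space T)) \<inter> space M)
      = prob (X -` (f -` A \<inter> space S) \<inter> space M) * prob (Y -` (g -` B \<inter> space T) \<inter> space M)"
    using indep measurable_sets[OF f A] measurable_sets[OF g B] by (rule indep_varD)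
  moreover have "(\<lambda>w. (X w, Y w)) -` ((f -` A \<inter> space S) \<times> (g -` B \<inter> space T)) \<inter> space M
      = (\<lambda>w. f (X w)) -` A \<inter> (\<lambda>w. g (Y w)) -` B \<inter> space M"
    "X -` (f -` A \<inter> space S) \<inter> space M = (\<lambda>w. f (X w)) -` A \<inter> space M"
    "Y -` (g -` B \<inter> space T) \<inter> space M = (\<lambda>w. g (Y w)) -` B \<inter> space M"
    using measurable_space[OF X] measurable_space[OF Y] by auto
  ultimately show "prob ((\<lambda>w. f (X w)) -` A \<inter> (\<lambda>w. g (Y w)) -` B \<inter> space M)
      = prob ((\<lambda>w. f (X w)) -` A \<inter> space M) * prob ((\<lambda>w. g (Y w)) -` B \<inter> space M)"
    by simp
qed

lemma indep_var_of_indep_rvs: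
  assumes indep: "indep_rvs S X T Y" and X: "X \<in> measurable M S" and Y: "Y \<in> measurable M T"
    and f: "f \<in> measurable S T"
  shows "indep_var T (\<lambda>w. f (X w)) T Y"
proof -
  have fX: "(\<lambda>w. f (X w)) \<in> measurable M T"
    using X f by (rule measurable_compose)
  have "indep_set {(\<lambda>w. f (X w)) -` A \<inter> space M | A. A \<in> sets T} {Y -` B \<inter> space M | B. B \<in> sets T}"
  proof (rule indep_setI)
    fix a b assume "a \<in> {(\<lambda>w. f (X w)) -` A \<inter> space M | A. A \<in> sets T}"
      and "b \<in> {Y -` B \<inter> space M | B. B \<in> sets T}"
    then obtain A B where a: "a = (\<lambda>w. f (X w)) -` A \<inter> space M" and A: "A \<in> sets T"
      and b: "b = Y -` B \<inter> space M" and B: "B \<in> sets T"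
      by blast
    define C where "C = f -` A \<inter> space S"
    have a_C: "a = X -` C \<inter> space M"
      unfolding a C_def using measurable_space[OF X] by auto
    have "C \<in> sets S"
      unfolding C_def using f A by (rule measurable_sets)
    then have "prob (X -` C \<inter> Y -` B \<inter> space M) = prob (X -` C \<inter> space M) * prob (Y -` B \<inter> space M)"
      using indep B unfolding indep_rvs_def by blast
    moreover have "a \<inter> b = X -` C \<inter> Y -` B \<inter> space M"
      unfolding a_C b by auto
    ultimately show "prob (a \<inter> b) = prob a * prob b"
      unfolding a_C b by simp
  qed (use measurable_sets[OF fX] measurable_sets[OF Y] in blast)+
  then show ?thesis
    unfolding indep_var_eq using fX Y
    by (intro conjI indep_set_sigma_sets Int_stable_vimage sets.Int_stable) auto
qed

lemma indep_set_cylinders: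
  fixes X :: "'i \<Rightarrow> 'a \<Rightarrow> 'b"
  assumes X: "\<And>k. k \<in> K \<Longrightarrow> X k \<in> measurable M N" and Z: "Z \<in> measurable M N'"
    and fin: "\<And>J. finite J \<Longrightarrow> J \<subseteq> K \<Longrightarrow> indep_rvs (PiM J (\<lambda>_. N)) (\<lambda>w. \<lambda>k\<in>J. X k w) N' Z"
    and V: "V = (\<lambda>w. \<lambda>k\<in>K. X k w)"
  shows "indep_set {V -` P \<inter> space M | P. P \<in> prod_algebra K (\<lambda>_. N)} {Z -` B \<inter> space M | B. B \<in> sets N'}"
proof (rule indep_setI)
  have V_measurable: "V \<in> measurable M (PiM K (\<lambda>_. N))"
    unfolding V by (intro measurable_restrict X)
  moreover have "prod_algebra K (\<lambda>_. N) \<subseteq> sets (PiM K (\<lambda>_. N))"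
    unfolding sets_PiM by (rule sigma_sets_superset_generator)
  ultimately show "{V -` P \<inter> space M | P. P \<in> prod_algebra K (\<lambda>_. N)} \<subseteq> events"
    using measurable_sets by blast
  show "{Z -` B \<inter> space M | B. B \<in> sets N'} \<subseteq> events"
    using measurable_sets[OF Z] by blast
  fix a b assume "a \<in> {V -` P \<inter> space M | P. P \<in> prod_algebra K (\<lambda>_. N)}"
    and "b \<in> {Z -` B \<inter> space M | B. B \<in> sets N'}"
  then obtain P B where a: "a = V -` P \<inter> space M" and P: "P \<in> prod_algebra K (\<lambda>_. N)"
    and b: "b = Z -` B \<inter> space M" and B: "B \<in> sets N'"
    by blast
  obtain J E where P_eq: "P = prod_emb K (\<lambda>_. N) J (PiE J E)" and J: "finite J" "J \<subseteq> K"
    and E: "\<And>i. i \<in> J \<Longrightarrow> E i \<in> sets N"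
    using prod_algebraE[OF P] by metis
  have "V w \<in> P \<longleftrightarrow> (\<lambda>k\<in>J. X k w) \<in> PiE J E" if "w \<in> space M" for w
  proof -
    have "V w \<in> (\<Pi>\<^sub>E k\<in>K. space N)"
      using that measurable_space[OF X] unfolding V by auto
    moreover have "restrict (V w) J = (\<lambda>k\<in>J. X k w)"
      using J(2) unfolding V by (simp add: Int_absorb1)
    ultimately show ?thesis
      unfolding P_eq prod_emb_def by auto
  qed
  then have a_eq: "a = (\<lambda>w. \<lambda>k\<in>J. X k w) -` PiE J E \<inter> space M"
    unfolding a by auto
  have "PiE J E \<in> sets (PiM J (\<lambda>_. N))"
    using J(1) E by (rule sets_PiM_I_finite)
  moreover have "a \<inter> b = (\<lambda>w. \<lambda>k\<in>J. X k w) -` PiE J E \<inter> Z -` B \<inter> space M"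
    unfolding a_eq b by auto
  ultimately show "prob (a \<inter> b) = prob a * prob b"
    using fin[OF J] B unfolding indep_rvs_def a_eq b by simp
qed

lemma indep_rvs_PiM_of_finite:
  fixes X :: "'i \<Rightarrow> 'a \<Rightarrow> 'b"
  assumes X: "\<And>k. k \<in> K \<Longrightarrow> X k \<in> measurable M N" and Z: "Z \<in> measurable M N'"
    and fin: "\<And>J. finite J \<Longrightarrow> J \<subseteq> K \<Longrightarrow> indep_rvs (PiM J (\<lambda>_. N)) (\<lambda>w. \<lambda>k\<in>J. X k w) N' Z"
  shows "indep_rvs (PiM K (\<lambda>_. N)) (\<lambda>w. \<lambda>k\<in>K. X k w) N' Z"
proof -
  define V where "V = (\<lambda>w. \<lambda>k\<in>K. X k w)"
  define GV where "GV = {V -` P \<inter> space M | P. P \<in> prod_algebra K (\<lambda>_. N)}"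
  define GZ where "GZ = {Z -` B \<inter> space M | B. B \<in> sets N'}"
  have "indep_set (sigma_sets (space M) GV) (sigma_sets (space M) GZ)"
    unfolding GV_def GZ_def using X Z fin V_def
    by (intro indep_set_sigma_sets indep_set_cylinders Int_stable_vimage Int_stable_prod_algebra
        sets.Int_stable)
  moreover have "{V -` P \<inter> space M | P. P \<in> sets (PiM K (\<lambda>_. N))} = sigma_sets (space M) GV"
    unfolding GV_def sets_PiM space_PiM[symmetric] V_def
    using measurable_space[OF measurable_restrict[OF X]] by (intro sigma_sets_vimage_commute) auto
  ultimately have "prob (V -` P \<inter> space M \<inter> (Z -` B \<inter> space M))
      = prob (V -` P \<inter> space M) * prob (Z -` B \<inter> space M)"
    if "P \<in> sets (PiM K (\<lambda>_. N))" "B \<in> sets N'" for P B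
    using that unfolding indep_sets2_eq GZ_def by blast
  moreover have "V -` P \<inter> Z -` B \<inter> space M = V -` P \<inter> space M \<inter> (Z -` B \<inter> space M)" for P B
    by auto
  ultimately show ?thesis
    unfolding indep_rvs_def V_def[symmetric] by simp
qed

lemma indep_var_AE_neq:
  assumes ind: "indep_var borel Y borel Z" and Z: "distributed M lborel Z f"
  shows "AE w in M. Y w \<noteq> (Z w :: real)"
proof -
  have Y: "Y \<in> borel_measurable M" and Zm: "Z \<in> borel_measurable M"
    using indep_var_rv1[OF ind] indep_var_rv2[OF ind] by auto
  define D where "D = {p \<in> space (borel \<Otimes>\<^sub>M borel). fst p = (snd p :: real)}"
  have D: "D \<in> sets (borel \<Otimes>\<^sub>M borel)"
    unfolding D_def by measurable
  interpret Zdistr: prob_space "distr M borel Z"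
    using Zm by (rule prob_space_distr)
  have "emeasure M {w \<in> space M. Y w = Z w} = emeasure M ((\<lambda>w. (Y w, Z w)) -` D \<inter> space M)"
    by (rule arg_cong[where f = "emeasure M"]) (auto simp: D_def space_pair_measure)
  also have "\<dots> = emeasure (distr M (borel \<Otimes>\<^sub>M borel) (\<lambda>w. (Y w, Z w))) D"
    using Y Zm D by (intro emeasure_distr[symmetric]) auto
  also have "\<dots> = emeasure (distr M borel Y \<Otimes>\<^sub>M distr M borel Z) D"
    using ind by (simp add: indep_var_distribution_eq)
  also have "\<dots> = (\<integral>\<^sup>+y. emeasure (distr M borel Z) (Pair y -` D) \<partial>distr M borel Y)"
    using D by (simp add: Zdistr.emeasure_pair_measure_alt)
  also have "\<dots> = 0"
  proof -
    have "Pair y -` D = {y}" for y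
      unfolding D_def by (auto simp: space_pair_measure)
    then show ?thesis
      using emeasure_distr_singleton_eq_0[OF Z] by simp
  qed
  finally have "emeasure M {w \<in> space M. Y w = Z w} = 0" .
  moreover have "{w \<in> space M. Y w = Z w} \<in> sets M"
    using Y Zm by measurable
  ultimately show ?thesis
    by (subst AE_iff_measurable) auto
qed

end

section \<open>Increments of the Brownian motions on a grid\<close>

lemma finite_subset_strict_mono_image:
  fixes T :: "real set"
  assumes "finite T"
  obtains ts :: "nat \<Rightarrow> real" and N where "strict_mono ts" "T \<subseteq> ts ` {..<N}"
proof -
  obtain xs where xs: "sorted_wrt (<) xs" "set xs = T"
    using finite_set_strict_sorted[OF assms] by blast
  define B where "B = Max (insert 0 T) + 1"
  have below_B: "t < B" if "t \<in> T" for t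
  proof -
    have "t \<le> Max (insert 0 T)"
      by (rule Max_ge) (use assms that in auto)
    then show ?thesis
      unfolding B_def by linarith
  qed
  define ts where "ts i = (if i < length xs then xs ! i else B + real i)" for i
  have "ts i < ts (Suc i)" for i
  proof (cases "Suc i < length xs")
    case True
    then show ?thesis
      using sorted_wrt_nth_less[OF xs(1), of i "Suc i"] by (simp add: ts_def)
  next
    case False
    have "xs ! i < B + real (Suc i)" if "i < length xs"
    proof -
      have "xs ! i < B"
        using below_B xs(2) that by auto
      then show ?thesis
        by linarith
    qed
    with False show ?thesis
      by (simp add: ts_def)
  qed
  then have "strict_mono ts"
    by (rule strict_mono_Suc_iff[THEN iffD2, rule_format])
  moreover have "T \<subseteq> ts ` {..<length xs}"
    using xs(2) by (auto simp: in_set_conv_nth ts_def image_iff)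
  ultimately show thesis
    by (rule that)
qed

lemma finite_rat_set_grid:
  fixes R :: "rat set"
  assumes "finite R"
  obtains ts :: "nat \<Rightarrow> real" and idx :: "rat \<Rightarrow> nat" and N :: nat
  where "strict_mono ts" "\<And>r. r \<in> R \<Longrightarrow> idx r < N" "\<And>r. r \<in> R \<Longrightarrow> ts (idx r) = of_rat r"
    "\<And>r r'. r \<in> R \<Longrightarrow> r' \<in> R \<Longrightarrow> idx r \<le> idx r' \<longleftrightarrow> r \<le> r'"
proof -
  have "finite (of_rat ` R :: real set)"
    using assms by simp
  then obtain ts :: "nat \<Rightarrow> real" and N where ts: "strict_mono ts" and R: "of_rat ` R \<subseteq> ts ` {..<N}"
    by (rule finite_subset_strict_mono_image)
  define idx where "idx r = inv_into {..<N} ts (of_rat r)" for r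
  have idx: "idx r < N \<and> ts (idx r) = of_rat r" if "r \<in> R" for r
  proof -
    have "of_rat r \<in> ts ` {..<N}"
      using R that by auto
    then show ?thesis
      unfolding idx_def by (metis inv_into_into f_inv_into_f lessThan_iff)
  qed
  moreover have "idx r \<le> idx r' \<longleftrightarrow> r \<le> r'" if "r \<in> R" "r' \<in> R" for r r'
  proof -
    have "idx r \<le> idx r' \<longleftrightarrow> ts (idx r) \<le> ts (idx r')"
      by (rule strict_mono_less_eq[OF ts, symmetric])
    then show ?thesis
      using idx[OF that(1)] idx[OF that(2)] by (simp add: of_rat_less_eq)
  qed
  ultimately show thesis
    using that[OF ts] by blast
qed

definition signed_sum :: "nat \<Rightarrow> nat \<Rightarrow> (nat \<Rightarrow> real) \<Rightarrow> real" where
  "signed_sum p q f = (\<Sum>i\<in>{p..<q}. f i) - (\<Sum>i\<in>{q..<p}. f i)"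

lemma signed_sum_telescope: "signed_sum p q (\<lambda>i. g (Suc i) - g i) = g q - g p"
  by (cases "p \<le> q") (simp_all add: signed_sum_def sum_Suc_diff')

lemma signed_sum_cong:
  "(\<And>i. i \<in> {p..<q} \<union> {q..<p} \<Longrightarrow> f i = g i) \<Longrightarrow> signed_sum p q f = signed_sum p q g"
  unfolding signed_sum_def by (intro arg_cong2[where f = "(-)"] sum.cong) auto

fun grid_cells :: "(rat \<Rightarrow> nat) \<Rightarrow> nat \<times> rat \<times> rat \<Rightarrow> (nat \<times> nat) set" where
  "grid_cells idx (y, s, t) = {y} \<times> ({idx s..<idx t} \<union> {idx t..<idx s})"

text \<open>For u the increments of W over the grid intervals [ts i, ts (Suc i)], this is the
  increment of W over (y, s, t).\<close>

fun grid_increment :: "(rat \<Rightarrow> nat) \<Rightarrow> (nat \<times> nat \<Rightarrow> real) \<Rightarrow> nat \<times> rat \<times> rat \<Rightarrow> real" where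
  "grid_increment idx u (y, s, t) = signed_sum (idx s) (idx t) (\<lambda>i. u (y, i))"

lemma grid_increment_restrict:
  assumes "grid_cells idx k \<subseteq> I"
  shows "grid_increment idx (restrict u I) k = grid_increment idx u k"
proof -
  obtain y s t where k: "k = (y, s, t)"
    by (cases k)
  show ?thesis
    using assms unfolding k by (auto intro!: signed_sum_cong)
qed

lemma grid_increment_eq_increment:
  assumes "grid_cells idx k \<subseteq> I" and "fst (snd k) \<in> R" "snd (snd k) \<in> R"
    and "\<And>r. r \<in> R \<Longrightarrow> ts (idx r) = of_rat r"
  shows "grid_increment idx (restrict (\<lambda>(y, i). W y (ts (Suc i)) w - W y (ts i) w) I) k = increment W k w"
proof -
  obtain y s t where k: "k = (y, s, t)"
    by (cases k)
  have "grid_increment idx (restrict (\<lambda>(y, i). W y (ts (Suc i)) w - W y (ts i) w) I) k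
      = grid_increment idx (\<lambda>(y, i). W y (ts (Suc i)) w - W y (ts i) w) k"
    using assms(1) by (rule grid_increment_restrict)
  also have "\<dots> = increment W k w"
    using signed_sum_telescope[of "idx s" "idx t" "\<lambda>i. W y (ts i) w"] assms(2-4) unfolding k by simp
  finally show ?thesis .
qed

lemma grid_increment_measurable:
  assumes "grid_cells idx k \<subseteq> I"
  shows "(\<lambda>u. grid_increment idx u k) \<in> borel_measurable (PiM I (\<lambda>_. borel))"
proof -
  obtain y s t where k: "k = (y, s, t)"
    by (cases k)
  have "(\<lambda>u. u (y, i)) \<in> borel_measurable (PiM I (\<lambda>_. borel))" if "i \<in> {idx s..<idx t} \<union> {idx t..<idx s}" for i
    using assms that unfolding k by (intro measurable_component_singleton) auto
  then show ?thesis
    unfolding k grid_increment.simps signed_sum_def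
    by (intro borel_measurable_diff borel_measurable_sum) auto
qed

lemma increments_avoiding_grid_cells:
  fixes idx :: "rat \<Rightarrow> nat"
  assumes "k \<in> increments_avoiding L x b c" "b \<le> c"
    and idx_lt: "\<And>r. r \<in> R \<Longrightarrow> idx r < N"
    and idx_le_iff: "\<And>r r'. r \<in> R \<Longrightarrow> r' \<in> R \<Longrightarrow> idx r \<le> idx r' \<longleftrightarrow> r \<le> r'"
    and R: "fst (snd k) \<in> R" "snd (snd k) \<in> R" "b \<in> R" "c \<in> R"
  shows "grid_cells idx k \<subseteq> {1..L - 1} \<times> {..<N} - grid_cells idx (x, b, c)"
proof -
  obtain y s t where k: "k = (y, s, t)"
    by (cases k)
  have "y \<in> {1..L - 1}" and "y \<noteq> x \<or> s \<le> b \<and> t \<le> b \<or> c \<le> s \<and> c \<le> t"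
    using assms(1) by (simp_all add: increments_avoiding_def k)
  moreover from this(2) have "y \<noteq> x \<or> idx s \<le> idx b \<and> idx t \<le> idx b \<or> idx c \<le> idx s \<and> idx c \<le> idx t"
    using idx_le_iff R by (auto simp: k)
  moreover have "idx b \<le> idx c" "idx s < N" "idx t < N"
    using idx_le_iff idx_lt R \<open>b \<le> c\<close> by (simp_all add: k)
  ultimately show ?thesis
    unfolding k by auto
qed

context prob_space
begin

lemma BM_increment_distributed:
  assumes BM: "indep_two_sided_BMs M L W" and y: "y \<in> {1..L - 1}" and "s < t"
  shows "distributed M lborel (\<lambda>w. W y t w - W y s w) (normal_density 0 (sqrt (t - s)))"
proof -
  define ts where "ts i = s + real i * (t - s)" for i
  have "strict_mono ts"
    unfolding strict_mono_Suc_iff ts_def using \<open>s < t\<close> by (simp add: algebra_simps)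
  then have "distributed M lborel (\<lambda>w. W y (ts (Suc 0)) w - W y (ts 0) w)
      (normal_density 0 (sqrt (ts (Suc 0) - ts 0)))"
    using BM y unfolding indep_two_sided_BMs_def by blast
  then show ?thesis
    by (simp add: ts_def)
qed

lemma BM_increment_measurable:
  assumes BM: "indep_two_sided_BMs M L W" and y: "y \<in> {1..L - 1}"
  shows "(\<lambda>w. W y t w - W y s w) \<in> borel_measurable M"
proof (cases s t rule: linorder_cases)
  case less
  then show ?thesis
    using BM_increment_distributed[OF BM y] by (simp add: distributed_def)
next
  case greater
  then have "(\<lambda>w. W y s w - W y t w) \<in> borel_measurable M"
    using BM_increment_distributed[OF BM y] by (simp add: distributed_def)
  then have "(\<lambda>w. - (W y s w - W y t w)) \<in> borel_measurable M"
    by (rule borel_measurable_uminus)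
  then show ?thesis
    by simp
qed simp

lemma indep_rvs_increments_avoiding:
  assumes BM: "indep_two_sided_BMs M L W" and x: "x \<in> {1..L - 1}" and "b < c"
    and J: "finite J" "J \<subseteq> increments_avoiding L x b c"
  shows "indep_rvs (PiM J (\<lambda>_. borel)) (\<lambda>w. \<lambda>k\<in>J. increment W k w) borel (increment W (x, b, c))"
proof -
  define R where "R = {b, c} \<union> (\<Union>(y, s, t)\<in>J. {s, t})"
  have R: "b \<in> R" "c \<in> R" "\<And>k. k \<in> J \<Longrightarrow> fst (snd k) \<in> R \<and> snd (snd k) \<in> R"
    unfolding R_def by force+
  have "finite R"
    using J(1) unfolding R_def by auto
  then obtain ts :: "nat \<Rightarrow> real" and idx :: "rat \<Rightarrow> nat" and N where ts: "strict_mono ts"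
    and idx: "\<And>r. r \<in> R \<Longrightarrow> idx r < N" "\<And>r. r \<in> R \<Longrightarrow> ts (idx r) = of_rat r"
    and idx_le_iff: "\<And>r r'. r \<in> R \<Longrightarrow> r' \<in> R \<Longrightarrow> idx r \<le> idx r' \<longleftrightarrow> r \<le> r'"
    using finite_rat_set_grid by metis
  define d where "d = (\<lambda>(y, i) w. W y (ts (Suc i)) w - W y (ts i) w)"
  have d_grid: "(\<lambda>i. d i w) = (\<lambda>(y, i). W y (ts (Suc i)) w - W y (ts i) w)" for w
    by (auto simp: d_def)
  define IZ where "IZ = grid_cells idx (x, b, c)"
  define IV where "IV = {1..L - 1} \<times> {..<N} - IZ"
  have "indep_vars (\<lambda>_. borel) d ({1..L - 1} \<times> {..<N})"
    using BM ts unfolding indep_two_sided_BMs_def d_def by blast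
  then have indep: "indep_var (PiM IV (\<lambda>_. borel)) (\<lambda>w. \<lambda>i\<in>IV. d i w)
      (PiM IZ (\<lambda>_. borel)) (\<lambda>w. \<lambda>i\<in>IZ. d i w)"
    using x idx(1)[OF R(1)] idx(1)[OF R(2)] by (intro indep_var_restrict) (auto simp: IV_def IZ_def)
  have cells_IV: "grid_cells idx k \<subseteq> IV" if "k \<in> J" for k
    unfolding IV_def IZ_def using that J(2) R \<open>b < c\<close>
    by (intro increments_avoiding_grid_cells[OF _ _ idx(1) idx_le_iff]) auto
  have "(\<lambda>u. \<lambda>k\<in>J. grid_increment idx u k) \<in> measurable (PiM IV (\<lambda>_. borel)) (PiM J (\<lambda>_. borel))"
    using cells_IV by (intro measurable_restrict grid_increment_measurable)
  moreover have "(\<lambda>u. grid_increment idx u (x, b, c)) \<in> borel_measurable (PiM IZ (\<lambda>_. borel))"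
    unfolding IZ_def by (rule grid_increment_measurable) simp
  ultimately have "indep_rvs (PiM J (\<lambda>_. borel)) (\<lambda>w. \<lambda>k\<in>J. grid_increment idx (\<lambda>i\<in>IV. d i w) k)
      borel (\<lambda>w. grid_increment idx (\<lambda>i\<in>IZ. d i w) (x, b, c))"
    by (rule indep_var_compose_indep_rvs[OF indep])
  moreover have "grid_increment idx (\<lambda>i\<in>IV. d i w) k = increment W k w" if "k \<in> J" for k w
    unfolding d_grid using cells_IV[OF that] R(3)[OF that] idx(2)
    by (intro grid_increment_eq_increment) auto
  moreover have "grid_increment idx (\<lambda>i\<in>IZ. d i w) (x, b, c) = increment W (x, b, c) w" for w
    unfolding d_grid IZ_def using R(1,2) idx(2)
    by (intro grid_increment_eq_increment) auto
  ultimately show ?thesis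
    by (simp cong: restrict_cong)
qed

section \<open>Almost sure uniqueness of the minimizer\<close>

lemma AE_increment_neq_level_gap:
  assumes BM: "indep_two_sided_BMs M L W" and x: "x \<in> {1..L - 1}" and "b < c"
  shows "AE w in M. increment W (x, b, c) w
    \<noteq> level_gap L x b c (\<lambda>k\<in>increments_avoiding L x b c. increment W k w)"
proof -
  have increment_measurable: "increment W k \<in> borel_measurable M" if "k \<in> increments_avoiding L x b c" for k
    using that BM_increment_measurable[OF BM] by (cases k) (simp add: increments_avoiding_def)
  have "indep_var borel (\<lambda>w. level_gap L x b c (\<lambda>k\<in>increments_avoiding L x b c. increment W k w))
      borel (increment W (x, b, c))"
  proof (rule indep_var_of_indep_rvs[where f = "level_gap L x b c"
        and X = "\<lambda>w. \<lambda>k\<in>increments_avoiding L x b c. increment W k w"])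
    show "indep_rvs (PiM (increments_avoiding L x b c) (\<lambda>_. borel))
        (\<lambda>w. \<lambda>k\<in>increments_avoiding L x b c. increment W k w) borel (increment W (x, b, c))"
    proof (rule indep_rvs_PiM_of_finite[where X = "increment W"])
      fix J assume "finite J" "J \<subseteq> increments_avoiding L x b c"
      then show "indep_rvs (PiM J (\<lambda>_. borel)) (\<lambda>w. \<lambda>k\<in>J. increment W k w) borel (increment W (x, b, c))"
        by (rule indep_rvs_increments_avoiding[OF BM x \<open>b < c\<close>])
    qed (use increment_measurable BM_increment_measurable[OF BM x] in auto)
  qed (use increment_measurable BM_increment_measurable[OF BM x] level_gap_measurable[OF x] in auto)
  moreover have "distributed M lborel (increment W (x, b, c)) (normal_density 0 (sqrt (of_rat c - of_rat b)))"
    using \<open>b < c\<close> by (simp add: BM_increment_distributed[OF BM x] of_rat_less)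
  ultimately show ?thesis
    by (auto dest: indep_var_AE_neq)
qed

lemma AE_zero_boundary_minimizers_eq:
  assumes BM: "indep_two_sided_BMs M L W"
  shows "AE w in M. \<forall>h g. is_minimizer L W w 0 0 h \<longrightarrow> is_minimizer L W w 0 0 g
    \<longrightarrow> (\<forall>x\<le>L. h x = g x)"
proof -
  define S where "S = {1..L - 1} \<times> {(b, c). b < (c :: rat)}"
  have "countable (UNIV :: (rat \<times> rat) set)"
    by simp
  then have "countable S"
    unfolding S_def by (auto intro: countable_SIGMA countable_subset[OF subset_UNIV])
  then have "AE w in M. \<forall>(x, b, c)\<in>S.
      increment W (x, b, c) w \<noteq> level_gap L x b c (\<lambda>k\<in>increments_avoiding L x b c. increment W k w)"
    by (subst AE_ball_countable) (auto simp: S_def simp del: increment.simps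
        intro!: AE_increment_neq_level_gap[OF BM])
  moreover have "AE w in M. \<forall>y\<in>{1..L - 1}. W y 0 w = 0 \<and> continuous_on UNIV (\<lambda>t. W y t w)"
    using BM unfolding indep_two_sided_BMs_def by blast
  ultimately show ?thesis
  proof eventually_elim
    case (elim w)
    then show ?case
      by (intro allI impI zero_boundary_minimizers_eq[where W = W and w = w])
        (auto simp: S_def simp del: increment.simps)
  qed
qed

end

theorem lemma6:
  fixes M :: "'a measure" and L :: nat and W :: "nat \<Rightarrow> real \<Rightarrow> 'a \<Rightarrow> real"
  assumes "prob_space M"
    and "L \<ge> 2" and "\<exists>k. L = 2 ^ k"
    and "indep_two_sided_BMs M L W"
  shows "AE w in M. \<forall>(h0::real) (h1::real) hstar h'.
           is_minimizer L W w 0 0 hstar \<longrightarrow> is_minimizer L W w h0 h1 h' \<longrightarrow>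
             ((h0 \<ge> 0 \<and> h1 \<ge> 0 \<longrightarrow> (\<forall>x\<le>L. hstar x \<le> h' x)) \<and>
              (h0 \<le> 0 \<and> h1 \<le> 0 \<longrightarrow> (\<forall>x\<le>L. hstar x \<ge> h' x)))"
proof -
  interpret prob_space M
    by fact
  show ?thesis
    using AE_zero_boundary_minimizers_eq[OF assms(4)]
  proof eventually_elim
    case (elim w)
    show ?case
    proof (intro allI impI, rule conjI)
      fix h0 h1 :: real and hstar h'
      assume hstar: "is_minimizer L W w 0 0 hstar" and h': "is_minimizer L W w h0 h1 h'"
      have unique: "\<forall>x\<le>L. g x = hstar x" if "is_minimizer L W w 0 0 g" for g
        using elim that hstar by blast
      show "h0 \<ge> 0 \<and> h1 \<ge> 0 \<longrightarrow> (\<forall>x\<le>L. hstar x \<le> h' x)"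
        using unique_zero_boundary_minimizer_le[OF hstar unique h'] by blast
      show "h0 \<le> 0 \<and> h1 \<le> 0 \<longrightarrow> (\<forall>x\<le>L. hstar x \<ge> h' x)"
        using unique_zero_boundary_minimizer_ge[OF hstar unique h'] by blast
    qed
  qed
qed

end
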